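(* Let $B>0$ and let $\phi\in L^2(\mathbb{R})$ be such that $\mathcal{A}\phi(x,0)\neq0$ for every $x\in[-2B,2B]$. Then for all $f,g\in L^2(\mathbb{R})$ vanishing almost everywhere outside $[-B,B]$, the following are equivalent: (1) $f=e^{i\alpha}g$ for some $\alpha\in\mathbb{R}$; (2) $|\mathcal{V}_\phi f(x,\omega)|=|\mathcal{V}_\phi g(x,\omega)|$ for all $x,\omega\in\mathbb{R}$.
   Context: For $f,\phi\in L^2(\mathbb{R})$ the short-time Fourier transform is $\mathcal{V}_\phi f(x,\omega)=\int_{\mathbb{R}} f(t)\overline{\phi(t-x)}e^{-2\pi i t\omega}\,dt$, and the ambiguity function of $f\in L^2(\mathbb{R})$ is $\mathcal{A}f(x,\omega):=e^{\pi i x\omega}\mathcal{V}_f f(x,\omega)$, for $x,\omega\in\mathbb{R}$. *)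

theory Defs
  imports "HOL-Analysis.Analysis"
begin

definition L2 :: "(real \<Rightarrow> complex) \<Rightarrow> bool" where
  "L2 f \<longleftrightarrow> f \<in> borel_measurable lborel \<and> integrable lborel (\<lambda>t. (cmod (f t))\<^sup>2)"

definition STFT :: "(real \<Rightarrow> complex) \<Rightarrow> (real \<Rightarrow> complex) \<Rightarrow> real \<Rightarrow> real \<Rightarrow> complex" where
  "STFT \<phi> f x \<omega> = (LINT t|lborel. f t * cnj (\<phi> (t - x)) * exp (- 2 * pi * \<i> * complex_of_real (t * \<omega>)))"

definition ambiguity :: "(real \<Rightarrow> complex) \<Rightarrow> real \<Rightarrow> real \<Rightarrow> complex" where
  "ambiguity f x \<omega> = exp (pi * \<i> * complex_of_real (x * \<omega>)) * STFT f f x \<omega>"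

end

theory Submission
  imports Defs "HOL-Probability.Levy" "HOL-Complex_Analysis.Conformal_Mappings"
begin

text \<open>For fixed x, the squared modulus of the STFT is the Fourier transform of the autocorrelation
  of the windowed signal f \<cdot> cnj (\<phi> (\<cdot> - x)), so equal spectrogram magnitudes give equal
  autocorrelations. At a fixed lag s, this autocorrelation, viewed as a function of x, is the
  correlation of the lag product f (\<cdot> + s) cnj f with the window's lag product
  cnj (\<phi> (\<cdot> + s)) \<phi>; its Fourier transform therefore factors, and the window factor is nonzero near
  frequency 0 because its value there is the ambiguity function at (-s, 0). As the lag product of f is
  compactly supported, its Fourier transform is entire, so agreement near 0 propagates to all
  frequencies. Hence f (t) cnj (f u) = g (t) cnj (g u) almost everywhere, which determines f up to a
  global phase.\<close>

lemma borel_measurable_cnj [measurable (raw)]: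
  "f \<in> borel_measurable M \<Longrightarrow> (\<lambda>x. cnj (f x)) \<in> borel_measurable M"
  by (rule borel_measurable_continuous_on[where f=cnj]) (auto intro: continuous_intros)

lemma AE_lborel_swap:
  fixes P :: "real \<Rightarrow> real \<Rightarrow> bool"
  assumes "Measurable.pred (lborel \<Otimes>\<^sub>M lborel) (\<lambda>p. P (fst p) (snd p))"
    and "AE x in lborel. AE y in lborel. P x y"
  shows "AE y in lborel. AE x in lborel. P x y"
  using assms lborel_pair.AE_commute[of P] by (simp add: pred_def)

lemma AE_lborel_swap_translate:
  fixes P :: "real \<Rightarrow> real \<Rightarrow> bool"
  assumes P[measurable]: "Measurable.pred (lborel \<Otimes>\<^sub>M lborel) (\<lambda>p. P (fst p) (snd p))"
    and "AE s in lborel. AE u in lborel. P (u + s) u"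
  shows "AE u in lborel. AE t in lborel. P t u"
proof -
  have "(\<lambda>p. (snd p + fst p, snd p)) \<in> lborel \<Otimes>\<^sub>M lborel \<rightarrow>\<^sub>M lborel \<Otimes>\<^sub>M lborel"
    by measurable
  from measurable_compose[OF this P]
  have "AE u in lborel. AE s in lborel. P (u + s) u"
    by (intro AE_lborel_swap[OF _ assms(2)]) (simp add: comp_def)
  then show ?thesis
  proof eventually_elim
    case (elim u)
    have "(\<lambda>s. (u + s, u)) \<in> borel \<rightarrow>\<^sub>M lborel \<Otimes>\<^sub>M lborel"
      by measurable
    from measurable_compose[OF this P]
    have "Measurable.pred borel (\<lambda>s. P (u + s) u)" by (simp add: comp_def)
    from AE_borel_affine[OF _ this elim, of 1 "- u"] show ?case by simp
  qed
qed

section \<open>Uniqueness of the Fourier transform\<close>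

lemma real_distribution_normalized_density:
  fixes g :: "real \<Rightarrow> real"
  assumes g: "integrable lborel g" "\<And>t. g t \<ge> 0" and m: "integral\<^sup>L lborel g = m" "m > 0"
  shows "real_distribution (density lborel (\<lambda>t. ennreal (g t / m)))"
proof -
  have [measurable]: "g \<in> borel_measurable borel" using g by auto
  have "emeasure (density lborel (\<lambda>t. ennreal (g t / m))) UNIV = ennreal (\<integral>t. g t / m \<partial>lborel)"
    by (simp add: emeasure_density nn_integral_eq_integral g m less_imp_le)
  also have "\<dots> = 1" using m by simp
  finally have "prob_space (density lborel (\<lambda>t. ennreal (g t / m)))"
    by (intro prob_spaceI) simp
  then show ?thesis unfolding real_distribution_def real_distribution_axioms_def by simp
qed

lemma char_normalized_density:
  fixes g :: "real \<Rightarrow> real"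
  assumes g: "integrable lborel g" "\<And>t. g t \<ge> 0" and m: "m > 0"
  shows "char (density lborel (\<lambda>t. ennreal (g t / m))) \<omega> = (\<integral>t. g t *\<^sub>R iexp (\<omega> * t) \<partial>lborel) / m"
proof -
  have [measurable]: "g \<in> borel_measurable borel" using g by auto
  have "char (density lborel (\<lambda>t. ennreal (g t / m))) \<omega> = (\<integral>t. (1 / m) *\<^sub>R (g t *\<^sub>R iexp (\<omega> * t)) \<partial>lborel)"
    unfolding char_def by (subst integral_density) (auto simp: g m less_imp_le)
  then show ?thesis by (simp add: divide_inverse scaleR_conv_of_real mult.commute)
qed

text \<open>Uniqueness of the Fourier transform for nonnegative functions is Levy's uniqueness theorem
  for characteristic functions, applied to the normalized densities.\<close>

lemma AE_eq_if_integral_iexp_eq_nonneg: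
  fixes p q :: "real \<Rightarrow> real"
  assumes p: "integrable lborel p" "\<And>t. p t \<ge> 0" and q: "integrable lborel q" "\<And>t. q t \<ge> 0"
    and eq: "\<And>\<omega>. (\<integral>t. p t *\<^sub>R iexp (\<omega> * t) \<partial>lborel) = (\<integral>t. q t *\<^sub>R iexp (\<omega> * t) \<partial>lborel)"
  shows "AE t in lborel. p t = q t"
proof -
  have [measurable]: "p \<in> borel_measurable borel" "q \<in> borel_measurable borel" using p q by auto
  define m where "m = integral\<^sup>L lborel p"
  have mq: "integral\<^sup>L lborel q = m" using eq[of 0] by (simp add: m_def p q)
  have "m \<ge> 0" unfolding m_def by (rule integral_nonneg_AE) (simp add: p)
  then consider "m = 0" | "m > 0" by fastforce
  then show ?thesis
  proof cases
    case 1
    have "AE t in lborel. p t = 0" using 1 p unfolding m_def by (simp add: integral_nonneg_eq_0_iff_AE)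
    moreover have "AE t in lborel. q t = 0" using 1 q mq by (simp add: integral_nonneg_eq_0_iff_AE)
    ultimately show ?thesis by eventually_elim simp
  next
    case 2
    have "density lborel (\<lambda>t. ennreal (p t / m)) = density lborel (\<lambda>t. ennreal (q t / m))"
      using 2 p q mq eq
      by (intro Levy_uniqueness real_distribution_normalized_density ext)
         (simp_all add: m_def char_normalized_density)
    then have "AE t in lborel. ennreal (p t / m) = ennreal (q t / m)"
      by (intro sigma_finite_measure.density_unique[OF sigma_finite_lborel]) auto
    then show ?thesis by eventually_elim (use 2 p q in \<open>auto simp: ennreal_inj\<close>)
  qed
qed

lemma AE_zero_if_integral_iexp_zero_real:
  fixes h :: "real \<Rightarrow> real"
  assumes h: "integrable lborel h" and F: "\<And>\<omega>. (\<integral>t. h t *\<^sub>R iexp (\<omega> * t) \<partial>lborel) = 0"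
  shows "AE t in lborel. h t = 0"
proof -
  define p where "p t = max (h t) 0" for t
  define q where "q t = max (- h t) 0" for t
  have pq: "integrable lborel p" "integrable lborel q" "\<And>t. p t \<ge> 0" "\<And>t. q t \<ge> 0"
    unfolding p_def q_def using h by (auto intro!: integrable_max)
  have h_eq: "h t = p t - q t" for t unfolding p_def q_def by auto
  have ie: "integrable lborel (\<lambda>t. g t *\<^sub>R iexp (\<omega> * t))" if "integrable lborel g" for g \<omega>
    by (rule Bochner_Integration.integrable_bound[OF that]) (use that in \<open>auto simp: norm_exp_i_times\<close>)
  have "AE t in lborel. p t = q t"
  proof (rule AE_eq_if_integral_iexp_eq_nonneg[OF pq(1,3,2,4)])
    fix \<omega>
    have "(\<integral>t. p t *\<^sub>R iexp (\<omega> * t) \<partial>lborel) - (\<integral>t. q t *\<^sub>R iexp (\<omega> * t) \<partial>lborel)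
      = (\<integral>t. h t *\<^sub>R iexp (\<omega> * t) \<partial>lborel)"
      by (subst Bochner_Integration.integral_diff[OF ie[OF pq(1)] ie[OF pq(2)], symmetric])
         (simp add: h_eq algebra_simps)
    then show "(\<integral>t. p t *\<^sub>R iexp (\<omega> * t) \<partial>lborel) = (\<integral>t. q t *\<^sub>R iexp (\<omega> * t) \<partial>lborel)"
      using F by simp
  qed
  then show ?thesis by eventually_elim (simp add: h_eq)
qed

lemma integral_Re_iexp:
  fixes k :: "real \<Rightarrow> complex"
  assumes k: "integrable lborel k"
  shows "(\<integral>t. Re (k t) *\<^sub>R iexp (\<omega> * t) \<partial>lborel)
    = ((\<integral>t. k t * iexp (\<omega> * t) \<partial>lborel) + cnj (\<integral>t. k t * iexp (- \<omega> * t) \<partial>lborel)) / 2"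
proof -
  have [measurable]: "k \<in> borel_measurable borel" using k by auto
  have ie: "integrable lborel (\<lambda>t. k t * iexp (\<nu> * t))" for \<nu>
    by (rule Bochner_Integration.integrable_bound[OF k]) (auto simp: norm_mult norm_exp_i_times)
  have pointwise: "Re (k t) *\<^sub>R iexp (\<omega> * t) = (k t * iexp (\<omega> * t) + cnj (k t * iexp (- \<omega> * t))) / 2" for t
  proof -
    have "k t * iexp (\<omega> * t) + cnj (k t * iexp (- \<omega> * t)) = (k t + cnj (k t)) * iexp (\<omega> * t)"
      by (simp add: exp_cnj algebra_simps)
    then show ?thesis by (simp add: complex_add_cnj scaleR_conv_of_real)
  qed
  have "(\<integral>t. Re (k t) *\<^sub>R iexp (\<omega> * t) \<partial>lborel)
      = (\<integral>t. (k t * iexp (\<omega> * t) + cnj (k t * iexp (- \<omega> * t))) / 2 \<partial>lborel)"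
    by (rule Bochner_Integration.integral_cong[OF refl pointwise])
  also have "\<dots> = ((\<integral>t. k t * iexp (\<omega> * t) \<partial>lborel) + cnj (\<integral>t. k t * iexp (- \<omega> * t) \<partial>lborel)) / 2"
    by (simp only: integral_divide_zero Bochner_Integration.integral_add[OF ie integrable_cnj[OF ie]]
        Bochner_Integration.integral_cnj)
  finally show ?thesis .
qed

lemma AE_zero_if_integral_iexp_zero:
  fixes k :: "real \<Rightarrow> complex"
  assumes k: "integrable lborel k" and F: "\<And>\<omega>. (\<integral>t. k t * iexp (\<omega> * t) \<partial>lborel) = 0"
  shows "AE t in lborel. k t = 0"
proof -
  have Re_zero: "AE t in lborel. Re (h t) = 0"
    if h: "integrable lborel h" "\<And>\<omega>. (\<integral>t. h t * iexp (\<omega> * t) \<partial>lborel) = 0" for h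
  proof (rule AE_zero_if_integral_iexp_zero_real)
    show "integrable lborel (\<lambda>t. Re (h t))" using h(1) by auto
    show "(\<integral>t. Re (h t) *\<^sub>R iexp (\<omega> * t) \<partial>lborel) = 0" for \<omega>
      unfolding integral_Re_iexp[OF h(1)] h(2) by simp
  qed
  have "AE t in lborel. Re (k t) = 0" by (rule Re_zero[OF k F])
  moreover have "AE t in lborel. Re (- \<i> * k t) = 0"
    by (rule Re_zero) (use k F in \<open>simp_all add: mult.assoc\<close>)
  ultimately show ?thesis by eventually_elim (simp add: complex_eq_iff)
qed

definition fourier_kernel :: "real \<Rightarrow> real \<Rightarrow> complex" where
  "fourier_kernel t \<omega> = exp (- 2 * pi * \<i> * complex_of_real (t * \<omega>))"

definition fourier :: "(real \<Rightarrow> complex) \<Rightarrow> real \<Rightarrow> complex" where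
  "fourier h \<omega> = (\<integral>t. h t * fourier_kernel t \<omega> \<partial>lborel)"

lemma fourier_kernel_measurable [measurable (raw)]:
  "f \<in> borel_measurable M \<Longrightarrow> g \<in> borel_measurable M \<Longrightarrow> (\<lambda>x. fourier_kernel (f x) (g x)) \<in> borel_measurable M"
  unfolding fourier_kernel_def by measurable

lemma fourier_kernel_iexp: "fourier_kernel t \<omega> = iexp ((- 2 * pi * \<omega>) * t)"
  unfolding fourier_kernel_def by (simp add: algebra_simps)

lemma norm_fourier_kernel [simp]: "norm (fourier_kernel t \<omega>) = 1"
  unfolding fourier_kernel_iexp by (rule norm_exp_i_times)

lemma fourier_kernel_add: "fourier_kernel (a + b) \<omega> = fourier_kernel a \<omega> * fourier_kernel b \<omega>"
  unfolding fourier_kernel_def by (simp add: exp_add[symmetric] algebra_simps)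

lemma cnj_fourier_kernel: "cnj (fourier_kernel t \<omega>) = fourier_kernel (- t) \<omega>"
  unfolding fourier_kernel_def by (simp add: exp_cnj)

lemma fourier_kernel_uminus_freq: "fourier_kernel t (- \<omega>) = fourier_kernel (- t) \<omega>"
  unfolding fourier_kernel_def by simp

lemma integrable_mult_fourier_kernel:
  fixes h :: "real \<Rightarrow> complex"
  assumes "integrable lborel h" "a \<in> borel_measurable borel" "b \<in> borel_measurable borel"
  shows "integrable lborel (\<lambda>t. h t * fourier_kernel (a t) (b t))"
  by (rule Bochner_Integration.integrable_bound[OF assms(1)]) (use assms in \<open>auto simp: norm_mult\<close>)

lemma fourier_diff:
  assumes "integrable lborel h" "integrable lborel k"
  shows "fourier (\<lambda>t. h t - k t) \<omega> = fourier h \<omega> - fourier k \<omega>"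
  unfolding fourier_def left_diff_distrib
  by (intro Bochner_Integration.integral_diff integrable_mult_fourier_kernel assms) simp_all

lemma AE_zero_if_fourier_zero:
  assumes k: "integrable lborel k" and F: "\<And>\<omega>. fourier k \<omega> = 0"
  shows "AE t in lborel. k t = 0"
proof (rule AE_zero_if_integral_iexp_zero[OF k])
  fix \<omega>
  have "fourier_kernel t (- \<omega> / (2 * pi)) = iexp (\<omega> * t)" for t
    unfolding fourier_kernel_iexp by simp
  then show "(\<integral>t. k t * iexp (\<omega> * t) \<partial>lborel) = 0"
    using F[of "- \<omega> / (2 * pi)"] by (simp add: fourier_def)
qed

lemma isCont_fourier:
  assumes h: "integrable lborel h"
  shows "isCont (fourier h) \<omega>"
  unfolding continuous_at_sequentially
proof safe
  have [measurable]: "h \<in> borel_measurable borel" using h by auto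
  fix X assume X: "X \<longlonglongrightarrow> \<omega>"
  have c: "continuous_on UNIV (fourier_kernel t)" for t
    unfolding fourier_kernel_def by (intro continuous_intros)
  show "(fourier h \<circ> X) \<longlonglongrightarrow> fourier h \<omega>"
    unfolding comp_def fourier_def
    by (rule integral_dominated_convergence[where w="\<lambda>t. norm (h t)"])
       (use h in \<open>auto simp: norm_mult intro!: tendsto_intros X continuous_on_tendsto_compose[OF c]\<close>)
qed

section \<open>Autocorrelation and correlation\<close>

lemma integral_translate:
  fixes h :: "real \<Rightarrow> 'a::{banach, second_countable_topology}"
  shows "(\<integral>x. h (u + x) \<partial>lborel) = integral\<^sup>L lborel h"
    and "(\<integral>x. h (u - x) \<partial>lborel) = integral\<^sup>L lborel h"
  using lborel_integral_real_affine[of 1 h u] lborel_integral_real_affine[of "-1" h u] by auto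

lemma integrable_pair_affine:
  fixes F \<Phi> :: "real \<Rightarrow> complex"
  assumes F: "integrable lborel F" and \<Phi>: "integrable lborel \<Phi>" and c: "c \<noteq> 0"
  shows "integrable (lborel \<Otimes>\<^sub>M lborel) (\<lambda>(u, x). F u * \<Phi> (u + c * x))"
proof (rule lborel_pair.Fubini_integrable)
  have [measurable]: "F \<in> borel_measurable borel" "\<Phi> \<in> borel_measurable borel" using F \<Phi> by auto
  show "(\<lambda>(u, x). F u * \<Phi> (u + c * x)) \<in> borel_measurable (lborel \<Otimes>\<^sub>M lborel)" by measurable
  have "(\<integral>x. norm (\<Phi> (u + c * x)) \<partial>lborel) = (\<integral>x. norm (\<Phi> x) \<partial>lborel) / \<bar>c\<bar>" for u
    using lborel_integral_real_affine[OF c, of "\<lambda>x. norm (\<Phi> x)" u] c by simp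
  then have "(\<integral>x. norm (case (u, x) of (u, x) \<Rightarrow> F u * \<Phi> (u + c * x)) \<partial>lborel)
      = norm (F u) * ((\<integral>x. norm (\<Phi> x) \<partial>lborel) / \<bar>c\<bar>)" for u
    by (simp add: norm_mult)
  then show "integrable lborel (\<lambda>u. \<integral>x. norm (case (u, x) of (u, x) \<Rightarrow> F u * \<Phi> (u + c * x)) \<partial>lborel)"
    using F by (simp del: norm_mult)
  show "AE u in lborel. integrable lborel (\<lambda>x. case (u, x) of (u, x) \<Rightarrow> F u * \<Phi> (u + c * x))"
    using lborel_integrable_real_affine[OF \<Phi> c] by simp
qed

definition autocorr :: "(real \<Rightarrow> complex) \<Rightarrow> real \<Rightarrow> complex" where
  "autocorr h s = (\<integral>u. h (u + s) * cnj (h u) \<partial>lborel)"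

lemma integrable_autocorr_pair:
  fixes h :: "real \<Rightarrow> complex"
  assumes h: "integrable lborel h"
  shows "integrable (lborel \<Otimes>\<^sub>M lborel) (\<lambda>(u, s). h (u + s) * cnj (h u))"
  using integrable_pair_affine[of "\<lambda>x. cnj (h x)" h 1] h by (simp add: mult.commute)

lemma integrable_autocorr:
  fixes h :: "real \<Rightarrow> complex"
  assumes h: "integrable lborel h"
  shows "integrable lborel (autocorr h)"
proof -
  have "integrable (lborel \<Otimes>\<^sub>M lborel) (\<lambda>(s, u). h (u + s) * cnj (h u))"
    using lborel_pair.integrable_product_swap[OF integrable_autocorr_pair[OF h]]
    by (simp add: case_prod_beta)
  from lborel_pair.integrable_fst'[OF this] show ?thesis unfolding autocorr_def by simp
qed

lemma fourier_autocorr: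
  fixes h :: "real \<Rightarrow> complex"
  assumes h: "integrable lborel h"
  shows "fourier (autocorr h) \<omega> = complex_of_real ((cmod (fourier h \<omega>))\<^sup>2)"
proof -
  have [measurable]: "h \<in> borel_measurable borel" using h by auto
  have int: "integrable (lborel \<Otimes>\<^sub>M lborel) (\<lambda>(u, s). h (u + s) * cnj (h u) * fourier_kernel s \<omega>)"
    by (rule Bochner_Integration.integrable_bound[OF integrable_autocorr_pair[OF h]])
       (auto simp: norm_mult)
  have inner: "(\<integral>s. h (u + s) * cnj (h u) * fourier_kernel s \<omega> \<partial>lborel)
      = cnj (h u * fourier_kernel u \<omega>) * fourier h \<omega>" for u
  proof -
    have "h (u + s) * cnj (h u) * fourier_kernel s \<omega>
        = h (u + s) * fourier_kernel (u + s) \<omega> * cnj (h u * fourier_kernel u \<omega>)" for s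
      by (simp add: cnj_fourier_kernel fourier_kernel_add[symmetric])
    then have "(\<integral>s. h (u + s) * cnj (h u) * fourier_kernel s \<omega> \<partial>lborel)
        = (\<integral>s. h (u + s) * fourier_kernel (u + s) \<omega> * cnj (h u * fourier_kernel u \<omega>) \<partial>lborel)"
      by (rule Bochner_Integration.integral_cong[OF refl])
    also have "\<dots> = (\<integral>s. h (u + s) * fourier_kernel (u + s) \<omega> \<partial>lborel) * cnj (h u * fourier_kernel u \<omega>)"
      by (rule integral_mult_left_zero)
    finally show ?thesis
      unfolding integral_translate(1)[of "\<lambda>t. h t * fourier_kernel t \<omega>"] fourier_def by simp
  qed
  have "fourier (autocorr h) \<omega> = (\<integral>s. \<integral>u. h (u + s) * cnj (h u) * fourier_kernel s \<omega> \<partial>lborel \<partial>lborel)"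
    unfolding fourier_def autocorr_def by simp
  also have "\<dots> = (\<integral>u. \<integral>s. h (u + s) * cnj (h u) * fourier_kernel s \<omega> \<partial>lborel \<partial>lborel)"
    using lborel_pair.Fubini_integral[of "\<lambda>u s. h (u + s) * cnj (h u) * fourier_kernel s \<omega>"] int
    by simp
  also have "\<dots> = cnj (fourier h \<omega>) * fourier h \<omega>"
    unfolding inner integral_mult_left_zero Bochner_Integration.integral_cnj fourier_def ..
  finally show ?thesis by (simp only: complex_norm_square mult.commute)
qed

definition correlation :: "(real \<Rightarrow> complex) \<Rightarrow> (real \<Rightarrow> complex) \<Rightarrow> real \<Rightarrow> complex" where
  "correlation F \<Phi> x = (\<integral>u. F u * \<Phi> (u - x) \<partial>lborel)"

lemma fourier_correlation:
  assumes F: "integrable lborel F" and \<Phi>: "integrable lborel \<Phi>"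
  shows "fourier (correlation F \<Phi>) \<eta> = fourier F \<eta> * fourier \<Phi> (- \<eta>)"
proof -
  have [measurable]: "F \<in> borel_measurable borel" "\<Phi> \<in> borel_measurable borel" using F \<Phi> by auto
  have "integrable (lborel \<Otimes>\<^sub>M lborel) (\<lambda>(u, x). F u * \<Phi> (u + -1 * x))"
    by (rule integrable_pair_affine[OF F \<Phi>]) simp
  then have "integrable (lborel \<Otimes>\<^sub>M lborel) (\<lambda>(u, x). F u * \<Phi> (u - x))"
    by simp
  then have int: "integrable (lborel \<Otimes>\<^sub>M lborel) (\<lambda>(u, x). F u * \<Phi> (u - x) * fourier_kernel x \<eta>)"
    by (rule Bochner_Integration.integrable_bound) (auto simp: norm_mult)
  have inner: "(\<integral>x. F u * \<Phi> (u - x) * fourier_kernel x \<eta> \<partial>lborel)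
      = F u * fourier_kernel u \<eta> * fourier \<Phi> (- \<eta>)" for u
  proof -
    have "F u * \<Phi> (u - x) * fourier_kernel x \<eta>
        = F u * fourier_kernel u \<eta> * (\<Phi> (u - x) * fourier_kernel (u - x) (- \<eta>))" for x
      by (simp add: fourier_kernel_uminus_freq fourier_kernel_add[symmetric])
    then have "(\<integral>x. F u * \<Phi> (u - x) * fourier_kernel x \<eta> \<partial>lborel)
        = (\<integral>x. F u * fourier_kernel u \<eta> * (\<Phi> (u - x) * fourier_kernel (u - x) (- \<eta>)) \<partial>lborel)"
      by (rule Bochner_Integration.integral_cong[OF refl])
    also have "\<dots> = F u * fourier_kernel u \<eta> * (\<integral>x. \<Phi> (u - x) * fourier_kernel (u - x) (- \<eta>) \<partial>lborel)"
      by (rule integral_mult_right_zero)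
    finally show ?thesis
      unfolding integral_translate(2)[of "\<lambda>t. \<Phi> t * fourier_kernel t (- \<eta>)"] fourier_def .
  qed
  have "fourier (correlation F \<Phi>) \<eta> = (\<integral>x. \<integral>u. F u * \<Phi> (u - x) * fourier_kernel x \<eta> \<partial>lborel \<partial>lborel)"
    unfolding fourier_def correlation_def by simp
  also have "\<dots> = (\<integral>u. \<integral>x. F u * \<Phi> (u - x) * fourier_kernel x \<eta> \<partial>lborel \<partial>lborel)"
    using lborel_pair.Fubini_integral[of "\<lambda>u x. F u * \<Phi> (u - x) * fourier_kernel x \<eta>"] int by simp
  also have "\<dots> = fourier F \<eta> * fourier \<Phi> (- \<eta>)"
    unfolding inner fourier_def by simp
  finally show ?thesis .
qed

section \<open>Compactly supported functions\<close>

lemma integral_exp_sums: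
  fixes k w :: "real \<Rightarrow> complex"
  assumes k: "integrable lborel k" and w[measurable]: "w \<in> borel_measurable borel"
    and bound: "AE u in lborel. k u \<noteq> 0 \<longrightarrow> norm (w u) \<le> r"
  shows "(\<lambda>n. \<integral>u. k u * (w u ^ n /\<^sub>R fact n) \<partial>lborel) sums (\<integral>u. k u * exp (w u) \<partial>lborel)"
proof -
  have [measurable]: "k \<in> borel_measurable borel" using k by auto
  define f where "f n u = k u * (w u ^ n /\<^sub>R fact n)" for n u
  have norm_f: "norm (f n u) = norm (k u) * (norm (w u) ^ n /\<^sub>R fact n)" for n u
    by (simp add: f_def norm_mult norm_power)
  have f_le: "AE u in lborel. norm (f n u) \<le> norm (k u) * (r ^ n /\<^sub>R fact n)" for n
    using bound
  proof eventually_elim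
    case (elim u)
    then show ?case
      by (cases "k u = 0") (auto simp: norm_f intro!: mult_left_mono divide_right_mono power_mono)
  qed
  have f_int: "integrable lborel (f n)" for n
  proof (rule Bochner_Integration.integrable_bound[where f="\<lambda>u. norm (k u) * (r ^ n /\<^sub>R fact n)"])
    show "integrable lborel (\<lambda>u. norm (k u) * (r ^ n /\<^sub>R fact n))" using k by simp
    show "f n \<in> borel_measurable lborel" unfolding f_def by measurable
    show "AE u in lborel. norm (f n u) \<le> norm (norm (k u) * (r ^ n /\<^sub>R fact n))"
      using f_le[of n] by eventually_elim (metis abs_ge_self order_trans real_norm_def)
  qed
  have "(\<lambda>n. integral\<^sup>L lborel (f n)) sums (\<integral>u. (\<Sum>n. f n u) \<partial>lborel)"
  proof (rule sums_integral[OF f_int])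
    show "AE u in lborel. summable (\<lambda>n. norm (f n u))"
      unfolding norm_f by (intro AE_I2 summable_mult summable_exp_generic)
    show "summable (\<lambda>n. \<integral>u. norm (f n u) \<partial>lborel)"
    proof (rule summable_comparison_test')
      show "summable (\<lambda>n. (\<integral>u. norm (k u) \<partial>lborel) * (r ^ n /\<^sub>R fact n))"
        by (intro summable_mult summable_exp_generic)
      show "norm (\<integral>u. norm (f n u) \<partial>lborel) \<le> (\<integral>u. norm (k u) \<partial>lborel) * (r ^ n /\<^sub>R fact n)" for n
        using integral_mono_AE[OF _ _ f_le[of n]] k f_int[of n] by simp
    qed
  qed
  moreover have "(\<Sum>n. f n u) = k u * exp (w u)" for u
    unfolding f_def by (intro sums_unique[symmetric] sums_mult exp_converges)
  ultimately show ?thesis unfolding f_def by simp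
qed

lemma fourier_power_series:
  fixes k :: "real \<Rightarrow> complex"
  assumes k: "integrable lborel k" and supp: "AE u in lborel. B < \<bar>u\<bar> \<longrightarrow> k u = 0"
  defines "c n \<equiv> \<integral>u. k u * ((- 2 * pi * \<i> * complex_of_real u) ^ n /\<^sub>R fact n) \<partial>lborel"
  shows "(\<lambda>n. c n * z ^ n) sums (\<integral>u. k u * exp (- 2 * pi * \<i> * complex_of_real u * z) \<partial>lborel)"
proof -
  have "AE u in lborel. k u \<noteq> 0 \<longrightarrow> norm (- 2 * pi * \<i> * complex_of_real u * z) \<le> 2 * pi * \<bar>B\<bar> * norm z"
    using supp by eventually_elim (auto simp: norm_mult intro!: mult_right_mono)
  from integral_exp_sums[OF k _ this]
  have "(\<lambda>n. \<integral>u. k u * ((- 2 * pi * \<i> * complex_of_real u * z) ^ n /\<^sub>R fact n) \<partial>lborel)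
      sums (\<integral>u. k u * exp (- 2 * pi * \<i> * complex_of_real u * z) \<partial>lborel)"
    by simp
  moreover have "(\<integral>u. k u * ((- 2 * pi * \<i> * complex_of_real u * z) ^ n /\<^sub>R fact n) \<partial>lborel) = c n * z ^ n" for n
  proof -
    have "k u * ((- 2 * pi * \<i> * complex_of_real u * z) ^ n /\<^sub>R fact n)
        = k u * ((- 2 * pi * \<i> * complex_of_real u) ^ n /\<^sub>R fact n) * z ^ n" for u
      unfolding power_mult_distrib[of "- 2 * pi * \<i> * complex_of_real u" z]
      by (simp add: scaleR_conv_of_real)
    then show ?thesis unfolding c_def by (simp only: integral_mult_left_zero)
  qed
  ultimately show ?thesis by simp
qed

lemma AE_zero_if_fourier_vanishes_near_0:
  fixes k :: "real \<Rightarrow> complex"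
  assumes k: "integrable lborel k" and supp: "AE u in lborel. B < \<bar>u\<bar> \<longrightarrow> k u = 0"
    and \<delta>: "\<delta> > 0" and vanish: "\<And>\<eta>. \<bar>\<eta>\<bar> < \<delta> \<Longrightarrow> fourier k \<eta> = 0"
  shows "AE u in lborel. k u = 0"
proof (rule AE_zero_if_fourier_zero[OF k])
  define c where "c n = (\<integral>u. k u * ((- 2 * pi * \<i> * complex_of_real u) ^ n /\<^sub>R fact n) \<partial>lborel)" for n
  define S where "S z = (\<Sum>n. c n * z ^ n)" for z
  have sums: "(\<lambda>n. c n * z ^ n) sums (\<integral>u. k u * exp (- 2 * pi * \<i> * complex_of_real u * z) \<partial>lborel)" for z
    unfolding c_def by (rule fourier_power_series[OF k supp])
  have S_eq: "S z = (\<integral>u. k u * exp (- 2 * pi * \<i> * complex_of_real u * z) \<partial>lborel)" for z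
    using sums[of z] unfolding S_def by (simp add: sums_iff)
  have S_real: "S (complex_of_real \<eta>) = fourier k \<eta>" for \<eta>
    unfolding S_eq fourier_def fourier_kernel_def by (simp add: algebra_simps)
  have "summable (\<lambda>n. c n * z ^ n)" for z
    using sums by (auto simp: sums_iff)
  from termdiffs_strong_converges_everywhere[OF this]
  have holo: "S holomorphic_on UNIV"
    unfolding S_def holomorphic_on_def field_differentiable_def
    by (auto intro: has_field_derivative_at_within)
  have "S (complex_of_real \<omega>) = 0" for \<omega>
  proof (rule analytic_continuation[OF holo open_UNIV connected_UNIV, where U="complex_of_real ` {-\<delta><..<\<delta>}" and \<xi>=0])
    show "0 islimpt complex_of_real ` {-\<delta><..<\<delta>}"
      unfolding islimpt_approachable
    proof (intro allI impI)
      fix e :: real assume "e > 0"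
      then show "\<exists>x'\<in>complex_of_real ` {-\<delta><..<\<delta>}. x' \<noteq> 0 \<and> dist x' 0 < e"
        using \<delta> by (intro bexI[of _ "complex_of_real (min \<delta> e / 2)"] imageI) auto
    qed
    show "S z = 0" if "z \<in> complex_of_real ` {-\<delta><..<\<delta>}" for z
      using that vanish by (auto simp: S_real)
  qed auto
  then show "fourier k \<omega> = 0" for \<omega>
    by (simp only: S_real)
qed

lemma AE_eq_if_correlation_AE_eq:
  fixes F G \<Phi> :: "real \<Rightarrow> complex"
  assumes F: "integrable lborel F" and G: "integrable lborel G" and \<Phi>: "integrable lborel \<Phi>"
    and supp_F: "AE u in lborel. B < \<bar>u\<bar> \<longrightarrow> F u = 0"
    and supp_G: "AE u in lborel. B < \<bar>u\<bar> \<longrightarrow> G u = 0"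
    and \<Phi>0: "fourier \<Phi> 0 \<noteq> 0"
    and eq: "AE x in lborel. correlation F \<Phi> x = correlation G \<Phi> x"
  shows "AE u in lborel. F u = G u"
proof -
  have [measurable]: "F \<in> borel_measurable borel" "G \<in> borel_measurable borel" "\<Phi> \<in> borel_measurable borel"
    using F G \<Phi> by auto
  have "fourier (correlation F \<Phi>) \<eta> = fourier (correlation G \<Phi>) \<eta>" for \<eta>
    unfolding fourier_def
    by (rule integral_cong_AE) (use eq in \<open>unfold correlation_def, measurable, auto elim: eventually_mono\<close>)
  then have spectra: "fourier F \<eta> * fourier \<Phi> (- \<eta>) = fourier G \<eta> * fourier \<Phi> (- \<eta>)" for \<eta>
    by (simp add: fourier_correlation F G \<Phi>)
  obtain \<delta> where \<delta>: "\<delta> > 0" "\<And>\<eta>. dist 0 \<eta> < \<delta> \<Longrightarrow> fourier \<Phi> \<eta> \<noteq> 0"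
    using continuous_at_avoid[OF isCont_fourier[OF \<Phi>] \<Phi>0] by blast
  have "AE u in lborel. F u - G u = 0"
  proof (rule AE_zero_if_fourier_vanishes_near_0[OF _ _ \<delta>(1)])
    show "integrable lborel (\<lambda>u. F u - G u)" using F G by simp
    show "AE u in lborel. B < \<bar>u\<bar> \<longrightarrow> F u - G u = 0"
      using supp_F supp_G by eventually_elim simp
    show "fourier (\<lambda>u. F u - G u) \<eta> = 0" if "\<bar>\<eta>\<bar> < \<delta>" for \<eta>
      using spectra[of \<eta>] \<delta>(2)[of "- \<eta>"] that by (simp add: fourier_diff F G)
  qed
  then show ?thesis by eventually_elim simp
qed

section \<open>Windowed signals and phase retrieval\<close>

lemma L2_measurable [measurable_dest]: "L2 a \<Longrightarrow> a \<in> borel_measurable borel"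
  unfolding L2_def by auto

lemma integrable_mult_L2:
  assumes "L2 a" "L2 b"
  shows "integrable lborel (\<lambda>t. a t * b t)"
proof (rule Bochner_Integration.integrable_bound[where f="\<lambda>t. (cmod (a t))\<^sup>2 + (cmod (b t))\<^sup>2"])
  show "integrable lborel (\<lambda>t. (cmod (a t))\<^sup>2 + (cmod (b t))\<^sup>2)"
    using assms unfolding L2_def by auto
  show "(\<lambda>t. a t * b t) \<in> borel_measurable lborel" using assms by measurable
  have "x * y \<le> x\<^sup>2 + y\<^sup>2" if "x \<ge> 0" "y \<ge> 0" for x y :: real
    using mult_nonneg_nonneg[OF that] zero_le_power2[of "x - y"] unfolding power2_diff by linarith
  then show "AE t in lborel. norm (a t * b t) \<le> norm ((cmod (a t))\<^sup>2 + (cmod (b t))\<^sup>2)"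
    by (simp add: norm_mult)
qed

lemma L2_translate:
  assumes "L2 a"
  shows "L2 (\<lambda>t. a (t + c))"
proof -
  have [measurable]: "a \<in> borel_measurable borel" using assms by measurable
  have "integrable lborel (\<lambda>t. (cmod (a t))\<^sup>2)" using assms unfolding L2_def by auto
  from lborel_integrable_real_affine[OF this, of 1 c]
  show ?thesis unfolding L2_def by (simp add: add.commute)
qed

lemma L2_cnj: "L2 a \<Longrightarrow> L2 (\<lambda>t. cnj (a t))"
  unfolding L2_def by auto

definition windowed :: "(real \<Rightarrow> complex) \<Rightarrow> (real \<Rightarrow> complex) \<Rightarrow> real \<Rightarrow> real \<Rightarrow> complex" where
  "windowed \<phi> f x t = f t * cnj (\<phi> (t - x))"

lemma STFT_eq_fourier_windowed: "STFT \<phi> f x \<omega> = fourier (windowed \<phi> f x) \<omega>"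
  unfolding STFT_def fourier_def fourier_kernel_def windowed_def by (simp add: mult.assoc)

lemma integrable_windowed:
  assumes "L2 \<phi>" "L2 f"
  shows "integrable lborel (windowed \<phi> f x)"
  using integrable_mult_L2[OF assms(2) L2_cnj[OF L2_translate[OF assms(1), of "- x"]]]
  unfolding windowed_def by simp

lemma STFT_eq_if_AE_eq_scaled:
  assumes [measurable]: "\<phi> \<in> borel_measurable borel" "f \<in> borel_measurable borel" "g \<in> borel_measurable borel"
    and eq: "AE t in lborel. f t = c * g t"
  shows "STFT \<phi> f x \<omega> = c * STFT \<phi> g x \<omega>"
proof -
  have "STFT \<phi> f x \<omega> = (\<integral>t. c * (g t * cnj (\<phi> (t - x)) * exp (- 2 * pi * \<i> * complex_of_real (t * \<omega>))) \<partial>lborel)"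
    unfolding STFT_def by (rule integral_cong_AE) (use eq in \<open>measurable, measurable, auto elim: eventually_mono\<close>)
  then show ?thesis unfolding STFT_def by simp
qed

lemma autocorr_windowed_eq_if_norm_STFT_eq:
  assumes \<phi>: "L2 \<phi>" and f: "L2 f" and g: "L2 g"
    and eq: "\<And>\<omega>. cmod (STFT \<phi> f x \<omega>) = cmod (STFT \<phi> g x \<omega>)"
  shows "AE s in lborel. autocorr (windowed \<phi> f x) s = autocorr (windowed \<phi> g x) s"
proof -
  note int = integrable_autocorr[OF integrable_windowed[OF \<phi> f]] integrable_autocorr[OF integrable_windowed[OF \<phi> g]]
  have "AE s in lborel. autocorr (windowed \<phi> f x) s - autocorr (windowed \<phi> g x) s = 0"
  proof (rule AE_zero_if_fourier_zero)
    show "integrable lborel (\<lambda>s. autocorr (windowed \<phi> f x) s - autocorr (windowed \<phi> g x) s)"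
      using int by simp
    show "fourier (\<lambda>s. autocorr (windowed \<phi> f x) s - autocorr (windowed \<phi> g x) s) \<omega> = 0" for \<omega>
      using eq[of \<omega>]
      by (simp add: fourier_diff int fourier_autocorr integrable_windowed \<phi> f g STFT_eq_fourier_windowed)
  qed
  then show ?thesis by eventually_elim simp
qed

lemma autocorr_windowed_eq_correlation:
  "autocorr (windowed \<phi> f x) s
    = correlation (\<lambda>u. f (u + s) * cnj (f u)) (\<lambda>y. cnj (\<phi> (y + s)) * \<phi> y) x"
  unfolding autocorr_def correlation_def windowed_def
  by (rule Bochner_Integration.integral_cong) (simp_all add: algebra_simps)

lemma fourier_window_lag_at_0: "fourier (\<lambda>y. cnj (\<phi> (y + s)) * \<phi> y) 0 = ambiguity \<phi> (- s) 0"
  unfolding fourier_def fourier_kernel_def ambiguity_def STFT_def by (simp add: mult.commute)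

lemma lag_product_vanishes:
  fixes f :: "real \<Rightarrow> complex"
  assumes [measurable]: "f \<in> borel_measurable borel"
    and supp: "AE u in lborel. B < \<bar>u\<bar> \<longrightarrow> f u = 0" and s: "2 * B < \<bar>s\<bar>"
  shows "AE u in lborel. f (u + s) * cnj (f u) = 0"
proof -
  have "Measurable.pred borel (\<lambda>u. B < \<bar>u\<bar> \<longrightarrow> f u = 0)" by measurable
  from AE_borel_affine[OF _ this supp, of 1 s]
  have "AE u in lborel. B < \<bar>s + u\<bar> \<longrightarrow> f (s + u) = 0" by simp
  with supp show ?thesis
  proof eventually_elim
    case (elim u)
    then show ?case using s by (cases "B < \<bar>u\<bar>") (auto simp: add.commute)
  qed
qed

text \<open>Away from the support the lag products vanish trivially; within it, the window's lag
  spectrum is nonzero at frequency 0, so the correlation with it can be cancelled.\<close>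

lemma lag_products_eq_if_autocorr_windowed_eq:
  assumes \<phi>: "L2 \<phi>" and amb: "\<forall>x\<in>{-2*B..2*B}. ambiguity \<phi> x 0 \<noteq> 0"
    and f: "L2 f" and g: "L2 g"
    and supp_f: "AE u in lborel. B < \<bar>u\<bar> \<longrightarrow> f u = 0"
    and supp_g: "AE u in lborel. B < \<bar>u\<bar> \<longrightarrow> g u = 0"
    and eq: "AE x in lborel. autocorr (windowed \<phi> f x) s = autocorr (windowed \<phi> g x) s"
  shows "AE u in lborel. f (u + s) * cnj (f u) = g (u + s) * cnj (g u)"
proof (cases "\<bar>s\<bar> \<le> 2 * B")
  case True
  show ?thesis
  proof (rule AE_eq_if_correlation_AE_eq)
    show "integrable lborel (\<lambda>u. f (u + s) * cnj (f u))" "integrable lborel (\<lambda>u. g (u + s) * cnj (g u))"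
      "integrable lborel (\<lambda>y. cnj (\<phi> (y + s)) * \<phi> y)"
      using f g \<phi> by (simp_all add: integrable_mult_L2 L2_translate L2_cnj)
    show "AE u in lborel. B < \<bar>u\<bar> \<longrightarrow> f (u + s) * cnj (f u) = 0"
      using supp_f by eventually_elim simp
    show "AE u in lborel. B < \<bar>u\<bar> \<longrightarrow> g (u + s) * cnj (g u) = 0"
      using supp_g by eventually_elim simp
    show "fourier (\<lambda>y. cnj (\<phi> (y + s)) * \<phi> y) 0 \<noteq> 0"
      using bspec[OF amb, of "- s"] True by (simp add: fourier_window_lag_at_0 abs_le_iff)
    show "AE x in lborel. correlation (\<lambda>u. f (u + s) * cnj (f u)) (\<lambda>y. cnj (\<phi> (y + s)) * \<phi> y) x
        = correlation (\<lambda>u. g (u + s) * cnj (g u)) (\<lambda>y. cnj (\<phi> (y + s)) * \<phi> y) x"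
      using eq by (simp add: autocorr_windowed_eq_correlation)
  qed
next
  case False
  then have "2 * B < \<bar>s\<bar>" by simp
  from lag_product_vanishes[OF _ supp_f this] lag_product_vanishes[OF _ supp_g this]
  show ?thesis using f g by (auto elim: AE_mp)
qed

lemma ex_witness_if_not_AE:
  assumes "AE u in lborel. P u" "\<not> (AE u in lborel. Q u)"
  shows "\<exists>u. P u \<and> \<not> Q u"
  using assms eventually_mono by blast

text \<open>Fixing a suitable u0 with g u0 \<noteq> 0 gives f = c g almost everywhere; substituting this back
  into the product identity shows that c has modulus 1.\<close>

lemma exists_phase_if_outer_products_eq:
  fixes f g :: "real \<Rightarrow> complex"
  assumes H: "AE u in lborel. AE t in lborel. f t * cnj (f u) = g t * cnj (g u)"
  shows "\<exists>\<alpha>::real. AE t in lborel. f t = exp (\<i> * complex_of_real \<alpha>) * g t"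
proof (cases "AE t in lborel. g t = 0")
  case True
  have "AE t in lborel. f t = 0"
  proof (rule ccontr)
    assume "\<not> (AE t in lborel. f t = 0)"
    from ex_witness_if_not_AE[OF H this] obtain u
      where u: "AE t in lborel. f t * cnj (f u) = g t * cnj (g u)" "f u \<noteq> 0"
      by blast
    from u(1) True have "AE t in lborel. f t = 0"
      by eventually_elim (use u(2) in auto)
    with \<open>\<not> (AE t in lborel. f t = 0)\<close> show False by simp
  qed
  with True have "AE t in lborel. f t = exp (\<i> * complex_of_real 0) * g t"
    by eventually_elim simp
  then show ?thesis by blast
next
  case False
  from ex_witness_if_not_AE[OF H False] obtain u0
    where u0: "AE t in lborel. f t * cnj (f u0) = g t * cnj (g u0)" "g u0 \<noteq> 0"
    by blast
  have "f u0 \<noteq> 0"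
  proof
    assume "f u0 = 0"
    from u0(1) have "AE t in lborel. g t = 0" by eventually_elim (use \<open>f u0 = 0\<close> u0(2) in auto)
    with False show False by simp
  qed
  define c where "c = cnj (g u0) / cnj (f u0)"
  have fc: "AE t in lborel. f t = c * g t"
    using u0(1) by eventually_elim (use \<open>f u0 \<noteq> 0\<close> in \<open>auto simp: c_def field_simps\<close>)
  have "AE u in lborel. (AE t in lborel. f t * cnj (f u) = g t * cnj (g u)) \<and> f u = c * g u"
    using H fc by eventually_elim auto
  from ex_witness_if_not_AE[OF this False] obtain u1 where
    u1: "AE t in lborel. f t * cnj (f u1) = g t * cnj (g u1)" "f u1 = c * g u1" "g u1 \<noteq> 0"
    by blast
  have "AE t in lborel. f t * cnj (f u1) = g t * cnj (g u1) \<and> f t = c * g t"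
    using u1(1) fc by eventually_elim auto
  from ex_witness_if_not_AE[OF this False] obtain t1 where
    t1: "f t1 * cnj (f u1) = g t1 * cnj (g u1)" "f t1 = c * g t1" "g t1 \<noteq> 0"
    by blast
  have "(c * cnj c) * (g t1 * cnj (g u1)) = 1 * (g t1 * cnj (g u1))"
    using t1 u1(2) by (simp add: mult_ac)
  then have "c * cnj c = 1" using t1(3) u1(3) by (subst (asm) mult_cancel_right) auto
  then have "complex_of_real ((cmod c)\<^sup>2) = 1" by (simp only: complex_norm_square)
  then have "(cmod c)\<^sup>2 = 1" by (simp only: of_real_eq_1_iff)
  then have "cmod c = 1" using norm_ge_zero[of c] by (auto simp: power2_eq_1_iff)
  then have "c = exp (\<i> * complex_of_real (Arg c))"
    using Arg_eq[of c] by (cases "c = 0") auto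
  with fc show ?thesis by (intro exI[of _ "Arg c"]) simp
qed

theorem mainTheorem11:
  fixes B :: real and \<phi> f g :: "real \<Rightarrow> complex"
  assumes "B > 0"
    and "L2 \<phi>"
    and "\<forall>x\<in>{-2*B..2*B}. ambiguity \<phi> x 0 \<noteq> 0"
    and "L2 f" and "L2 g"
    and "AE t in lborel. t \<notin> {-B..B} \<longrightarrow> f t = 0"
    and "AE t in lborel. t \<notin> {-B..B} \<longrightarrow> g t = 0"
  shows "(\<exists>\<alpha>::real. AE t in lborel. f t = exp (\<i> * complex_of_real \<alpha>) * g t)
     \<longleftrightarrow> (\<forall>x \<omega>. cmod (STFT \<phi> f x \<omega>) = cmod (STFT \<phi> g x \<omega>))"
proof -
  have [measurable]: "\<phi> \<in> borel_measurable borel" "f \<in> borel_measurable borel" "g \<in> borel_measurable borel"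
    using assms(2,4,5) by (simp_all add: L2_measurable)
  have supp_f: "AE u in lborel. B < \<bar>u\<bar> \<longrightarrow> f u = 0" using assms(6) by eventually_elim auto
  have supp_g: "AE u in lborel. B < \<bar>u\<bar> \<longrightarrow> g u = 0" using assms(7) by eventually_elim auto
  show ?thesis
  proof
    assume "\<exists>\<alpha>::real. AE t in lborel. f t = exp (\<i> * complex_of_real \<alpha>) * g t"
    then obtain \<alpha> :: real where "AE t in lborel. f t = exp (\<i> * complex_of_real \<alpha>) * g t" ..
    from STFT_eq_if_AE_eq_scaled[OF _ _ _ this]
    show "\<forall>x \<omega>. cmod (STFT \<phi> f x \<omega>) = cmod (STFT \<phi> g x \<omega>)"
      by (simp add: norm_mult norm_exp_i_times)
  next
    assume "\<forall>x \<omega>. cmod (STFT \<phi> f x \<omega>) = cmod (STFT \<phi> g x \<omega>)"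
    then have "AE x in lborel. AE s in lborel. autocorr (windowed \<phi> f x) s = autocorr (windowed \<phi> g x) s"
      by (intro AE_I2 autocorr_windowed_eq_if_norm_STFT_eq[OF assms(2,4,5)]) blast
    then have "AE s in lborel. AE x in lborel. autocorr (windowed \<phi> f x) s = autocorr (windowed \<phi> g x) s"
      by (rule AE_lborel_swap[rotated]) (unfold autocorr_def windowed_def, measurable)
    then have "AE s in lborel. AE u in lborel. f (u + s) * cnj (f u) = g (u + s) * cnj (g u)"
      by eventually_elim (rule lag_products_eq_if_autocorr_windowed_eq[OF assms(2-5) supp_f supp_g])
    then have "AE u in lborel. AE t in lborel. f t * cnj (f u) = g t * cnj (g u)"
      by (rule AE_lborel_swap_translate[rotated]) measurable
    then show "\<exists>\<alpha>::real. AE t in lborel. f t = exp (\<i> * complex_of_real \<alpha>) * g t"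
      by (rule exists_phase_if_outer_products_eq)
  qed
qed

end
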